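(* Let $f:\mathbb{R}^n\to\mathbb{R}$ be differentiable and pseudo-convex, with $\nabla f$ $L$-Lipschitz continuous, and assume the stationary set $X^*$ is non-empty. Then the sequence $\{x^k\}$ generated by Algorithm 2 (with $\nabla f(x^k)\ne0$ for all $k$) satisfies, for every $x^*\in X^*$ and every integer $K\ge1$, $$\frac1K\sum_{k=0}^{K-1}\|\nabla f(x^k)\|^2\le\frac{\|x^0-x^*\|^2}{K\kappa_2h_{\min}^2},$$ where $\kappa_2=2\beta-1-\beta^2\nu^2$ and $h_{\min}=\min\left\{\underline{h},\frac{\nu\theta}{\overline{h}\max\{L,1\}^2}\right\}$.
   Context: Pseudo-convex: $\nabla f$ pseudo-monotone, i.e. $\langle \nabla f(x),y-x\rangle\ge0\Rightarrow\langle\nabla f(y),y-x\rangle\ge0$ for all $x,y$. $X^*=\{x:\nabla f(x)=0\}$. Algorithm 2: parameters $0<\mu<\nu<1$, $0<\underline{h}<1\le\gamma_0^0\le\overline{h}$, $\theta\in(0,1)$, $\tau>1$, $\beta\in\left(\frac{1-\sqrt{1-\nu^2}}{\nu^2},1\right]$, starting point $x^0$. At iteration $k$: for $\gamma>0$ let $z^k(\gamma)=x^k-\gamma\nabla f(x^k)$ and $r_k(\gamma)=\gamma\|\nabla f(z^k(\gamma))-\nabla f(x^k)\|/\|z^k(\gamma)-x^k\|$; starting from $\gamma_0^k$, while $r_k(\gamma_l^k)>\nu$ set $\gamma_{l+1}^k=\gamma_l^k\theta\min\{1,1/r_k(\gamma_l^k)\}$; let $h_k$ be the first $\gamma_l^k$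 with $r_k(\gamma_l^k)\le\nu$. Then $z^k=x^k-h_k\nabla f(x^k)$, $x^{k+1}=x^k-h_k\big(\nabla f(x^k)-\beta(\nabla f(x^k)-\nabla f(z^k))\big)$, and $\gamma_0^{k+1}=\mathbf{P}_{[\underline{h},\overline{h}]}(\tau h_k)$ if $r_k(h_k)\le\mu$, else $\gamma_0^{k+1}=\mathbf{P}_{[\underline{h},\overline{h}]}(h_k)$, where $\mathbf{P}_{[a,b]}$ is projection onto $[a,b]$. *)

theory Defs
  imports "HOL-Analysis.Analysis"
begin

text \<open>Pseudo-convexity via pseudo-monotonicity of the gradient g.\<close>
definition pseudo_monotone :: "('a::real_inner \<Rightarrow> 'a) \<Rightarrow> bool" where
  "pseudo_monotone g \<longleftrightarrow>
     (\<forall>x y. g x \<bullet> (y - x) \<ge> 0 \<longrightarrow> g y \<bullet> (y - x) \<ge> 0)"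

definition proj_interval :: "real \<Rightarrow> real \<Rightarrow> real \<Rightarrow> real" where
  "proj_interval a b t = max a (min b t)"

definition ztrial :: "('a::real_normed_vector \<Rightarrow> 'a) \<Rightarrow> 'a \<Rightarrow> real \<Rightarrow> 'a" where
  "ztrial g x \<gamma> = x - \<gamma> *\<^sub>R g x"

definition rratio :: "('a::real_normed_vector \<Rightarrow> 'a) \<Rightarrow> 'a \<Rightarrow> real \<Rightarrow> real" where
  "rratio g x \<gamma> = \<gamma> * norm (g (ztrial g x \<gamma>) - g x) / norm (ztrial g x \<gamma> - x)"

text \<open>Backtracking trial steps gamma_l starting from gamma_0 (the update rule;
  only the values up to the first one with r \<le> nu matter).\<close>
primrec btrack :: "('a::real_normed_vector \<Rightarrow> 'a) \<Rightarrow> real \<Rightarrow> 'a \<Rightarrow> real \<Rightarrow> nat \<Rightarrow> real" where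
  "btrack g \<theta> x \<gamma>0 0 = \<gamma>0"
| "btrack g \<theta> x \<gamma>0 (Suc l) =
     btrack g \<theta> x \<gamma>0 l * \<theta> * min 1 (1 / rratio g x (btrack g \<theta> x \<gamma>0 l))"

definition hstep :: "('a::real_normed_vector \<Rightarrow> 'a) \<Rightarrow> real \<Rightarrow> real \<Rightarrow> 'a \<Rightarrow> real \<Rightarrow> real" where
  "hstep g \<nu> \<theta> x \<gamma>0 =
     btrack g \<theta> x \<gamma>0 (LEAST l. rratio g x (btrack g \<theta> x \<gamma>0 l) \<le> \<nu>)"

text \<open>Algorithm 2: the state at iteration k is the pair (x^k, gamma_0^k).\<close>
primrec alg2 :: "('a::real_normed_vector \<Rightarrow> 'a) \<Rightarrow> real \<Rightarrow> real \<Rightarrow> real \<Rightarrow> real \<Rightarrow> real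
    \<Rightarrow> real \<Rightarrow> real \<Rightarrow> 'a \<Rightarrow> real \<Rightarrow> nat \<Rightarrow> 'a \<times> real" where
  "alg2 g \<mu> \<nu> \<theta> \<tau> \<beta> hlo hhi x0 \<gamma>00 0 = (x0, \<gamma>00)"
| "alg2 g \<mu> \<nu> \<theta> \<tau> \<beta> hlo hhi x0 \<gamma>00 (Suc k) =
     (let (x, \<gamma>0) = alg2 g \<mu> \<nu> \<theta> \<tau> \<beta> hlo hhi x0 \<gamma>00 k;
          h = hstep g \<nu> \<theta> x \<gamma>0;
          z = x - h *\<^sub>R g x;
          x' = x - h *\<^sub>R (g x - \<beta> *\<^sub>R (g x - g z));
          \<gamma>0' = (if rratio g x h \<le> \<mu> then proj_interval hlo hhi (\<tau> * h)
                 else proj_interval hlo hhi h)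
      in (x', \<gamma>0'))"

end

theory Submission
  imports Defs
begin

text \<open>
  At a stationary point \<open>x\<^sup>*\<close> the gradient vanishes, so pseudo-monotonicity gives
  \<open>\<langle>\<nabla>f(y), y - x\<^sup>*\<rangle> \<ge> 0\<close> for every \<open>y\<close>, in particular at \<open>y = x\<^sup>k\<close> and
  \<open>y = z\<^sup>k\<close>. Combined with the acceptance test
  \<open>\<parallel>\<nabla>f(z\<^sup>k) - \<nabla>f(x\<^sup>k)\<parallel> \<le> \<nu> \<parallel>\<nabla>f(x\<^sup>k)\<parallel>\<close> this yields the Fejer-type descent
  \<open>\<parallel>x\<^sup>k\<^sup>+\<^sup>1 - x\<^sup>*\<parallel>\<^sup>2 \<le> \<parallel>x\<^sup>k - x\<^sup>*\<parallel>\<^sup>2 - \<kappa>\<^sub>2 h\<^sub>k\<^sup>2 \<parallel>\<nabla>f(x\<^sup>k)\<parallel>\<^sup>2\<close>.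
  Lipschitz continuity makes the backtracking terminate, and the last rejected trial step
  bounds \<open>h\<^sub>k\<close> from below by \<open>h\<^sub>m\<^sub>i\<^sub>n\<close>; summing the descent inequalities telescopes.
\<close>

lemma pseudo_monotone_stationary_inner_nonneg:
  assumes "pseudo_monotone g" "g xs = 0"
  shows "0 \<le> g y \<bullet> (y - xs)"
  using assms unfolding pseudo_monotone_def by (metis inner_zero_left order_refl)

lemma norm_ztrial_diff:
  "norm (ztrial g x \<gamma> - x) = \<bar>\<gamma>\<bar> * norm (g x)"
  by (simp add: ztrial_def)

lemma rratio_eq:
  assumes "g x \<noteq> 0" "0 < \<gamma>"
  shows "rratio g x \<gamma> = norm (g (ztrial g x \<gamma>) - g x) / norm (g x)"
  using assms by (simp add: rratio_def norm_ztrial_diff)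

lemma rratio_le_lipschitz:
  assumes "g x \<noteq> 0" "0 < \<gamma>" "L-lipschitz_on UNIV g"
  shows "rratio g x \<gamma> \<le> \<gamma> * L"
proof -
  have "norm (g (ztrial g x \<gamma>) - g x) \<le> L * (\<gamma> * norm (g x))"
    using lipschitz_on_normD[OF assms(3), of "ztrial g x \<gamma>" x] assms(2)
    by (simp add: norm_ztrial_diff)
  then show ?thesis
    using assms by (simp add: rratio_eq divide_le_eq mult_ac)
qed

lemma btrack_pos_le_pow:
  assumes "0 < \<theta>" "0 \<le> \<nu>" "0 < \<gamma>0"
    and "\<forall>l'<l. \<nu> < rratio g x (btrack g \<theta> x \<gamma>0 l')"
  shows "0 < btrack g \<theta> x \<gamma>0 l \<and> btrack g \<theta> x \<gamma>0 l \<le> \<theta> ^ l * \<gamma>0"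
  using assms(4)
proof (induction l)
  case 0
  then show ?case using assms by simp
next
  case (Suc l)
  let ?b = "btrack g \<theta> x \<gamma>0 l" and ?r = "rratio g x (btrack g \<theta> x \<gamma>0 l)"
  have b: "0 < ?b" "?b \<le> \<theta> ^ l * \<gamma>0" and r: "\<nu> < ?r"
    using Suc by auto
  have "0 < min 1 (1 / ?r)" "min 1 (1 / ?r) \<le> 1"
    using r assms(2) by auto
  then have "0 < ?b * \<theta> * min 1 (1 / ?r)" "?b * \<theta> * min 1 (1 / ?r) \<le> ?b * \<theta>"
    using b assms(1) by (simp_all add: mult_left_le)
  moreover have "?b * \<theta> \<le> \<theta> ^ Suc l * \<gamma>0"
    using b assms(1) by (simp add: mult_ac)
  ultimately show ?case by simp
qed

text \<open>The backtracking loop terminates: trial steps shrink geometrically, and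
  \<open>r(\<gamma>) \<le> \<gamma> L\<close> eventually drops below \<open>\<nu>\<close>.\<close>

lemma hstep_accepted:
  assumes "g x \<noteq> 0" "L-lipschitz_on UNIV g"
    and "0 < \<theta>" "\<theta> < 1" "0 < \<nu>" "0 < \<gamma>0"
  obtains l where "hstep g \<nu> \<theta> x \<gamma>0 = btrack g \<theta> x \<gamma>0 l"
    "rratio g x (btrack g \<theta> x \<gamma>0 l) \<le> \<nu>"
    "\<forall>l'<l. \<nu> < rratio g x (btrack g \<theta> x \<gamma>0 l')"
proof -
  let ?b = "btrack g \<theta> x \<gamma>0"
  have L: "0 \<le> L" using lipschitz_on_nonneg[OF assms(2)] .
  have "\<exists>l. rratio g x (?b l) \<le> \<nu>"
  proof (rule ccontr)
    assume "\<not> ?thesis"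
    then have rejected: "\<forall>l. \<nu> < rratio g x (?b l)" by (simp add: not_le)
    obtain n where n: "\<theta> ^ n < \<nu> / (\<gamma>0 * (L + 1))"
      using real_arch_pow_inv[of "\<nu> / (\<gamma>0 * (L + 1))" \<theta>] assms L by auto
    have b: "0 < ?b n" "?b n \<le> \<theta> ^ n * \<gamma>0"
      using btrack_pos_le_pow[of \<theta> \<nu> \<gamma>0 n g x] rejected assms by auto
    have "rratio g x (?b n) \<le> ?b n * (L + 1)"
      using rratio_le_lipschitz[OF assms(1) b(1) assms(2)] b(1) by (simp add: algebra_simps)
    also have "\<dots> \<le> \<theta> ^ n * \<gamma>0 * (L + 1)"
      using b L by (simp add: mult_right_mono)
    also have "\<dots> < \<nu>"
      using n assms L by (simp add: pos_less_divide_eq mult_ac)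
    finally show False using rejected by (meson less_asym)
  qed
  then show ?thesis
    using that[of "LEAST l. rratio g x (?b l) \<le> \<nu>"]
    by (metis (mono_tags, lifting) LeastI_ex hstep_def not_le not_less_Least)
qed

lemma hstep_pos:
  assumes "g x \<noteq> 0" "L-lipschitz_on UNIV g"
    and "0 < \<theta>" "\<theta> < 1" "0 < \<nu>" "0 < \<gamma>0"
  shows "0 < hstep g \<nu> \<theta> x \<gamma>0"
proof -
  obtain l where "hstep g \<nu> \<theta> x \<gamma>0 = btrack g \<theta> x \<gamma>0 l"
    "\<forall>l'<l. \<nu> < rratio g x (btrack g \<theta> x \<gamma>0 l')"
    using hstep_accepted[OF assms] by metis
  then show ?thesis
    using btrack_pos_le_pow[of \<theta> \<nu> \<gamma>0 l g x] assms by simp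
qed

lemma rratio_hstep_le:
  assumes "g x \<noteq> 0" "L-lipschitz_on UNIV g"
    and "0 < \<theta>" "\<theta> < 1" "0 < \<nu>" "0 < \<gamma>0"
  shows "rratio g x (hstep g \<nu> \<theta> x \<gamma>0) \<le> \<nu>"
  using hstep_accepted[OF assms] by metis

text \<open>If some trial step \<open>\<gamma>\<close> was rejected, then \<open>\<nu> < r(\<gamma>) \<le> \<gamma> M\<close>, so both factors
  of the next trial \<open>\<theta> min(\<gamma>, \<gamma>/r(\<gamma>))\<close> are at least \<open>\<nu>/M\<close>.\<close>

lemma hstep_ge:
  assumes "g x \<noteq> 0" "L-lipschitz_on UNIV g"
    and "0 < \<theta>" "\<theta> < 1" "0 < \<nu>" "\<nu> \<le> 1" "0 < \<gamma>0"
    and "L \<le> M" "0 < M"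
  shows "min \<gamma>0 (\<theta> * \<nu> / M) \<le> hstep g \<nu> \<theta> x \<gamma>0"
proof -
  let ?b = "btrack g \<theta> x \<gamma>0"
  obtain l where h: "hstep g \<nu> \<theta> x \<gamma>0 = ?b l"
    and rejected: "\<forall>l'<l. \<nu> < rratio g x (?b l')"
    using hstep_accepted[OF assms(1-5,7)] by metis
  show ?thesis
  proof (cases l)
    case 0
    then show ?thesis using h by simp
  next
    case (Suc m)
    let ?r = "rratio g x (?b m)"
    have b: "0 < ?b m" and r: "\<nu> < ?r"
      using btrack_pos_le_pow[of \<theta> \<nu> \<gamma>0 m g x] rejected Suc assms by auto
    have rM: "?r \<le> ?b m * M"
      using rratio_le_lipschitz[OF assms(1) b assms(2)] assms(8) b
      by (meson mult_left_mono less_imp_le order_trans)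
    have "\<nu> / M \<le> ?b m"
      using r rM assms(9) by (simp add: divide_le_eq mult_ac)
    moreover have "\<nu> / M \<le> ?b m / ?r"
    proof -
      have "1 / M \<le> ?b m / ?r"
        using rM r assms(5,9) by (simp add: divide_le_eq le_divide_eq mult_ac)
      then show ?thesis
        using assms(6,9) by (meson divide_right_mono less_imp_le order_trans)
    qed
    ultimately have "\<theta> * (\<nu> / M) \<le> \<theta> * min (?b m) (?b m / ?r)"
      using assms(3) by (intro mult_left_mono) auto
    also have "\<dots> = hstep g \<nu> \<theta> x \<gamma>0"
      using h Suc b assms(3)
      by (simp add: min_mult_distrib_left min_mult_distrib_right mult_ac)
    finally show ?thesis by simp
  qed
qed

text \<open>One step \<open>x\<^sup>+ = x - h (G - \<beta> (G - Z))\<close> measured from \<open>x\<^sup>*\<close>, where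
  \<open>a = x - x\<^sup>*\<close>, \<open>G = \<nabla>f(x)\<close> and \<open>Z = \<nabla>f(x - h G)\<close>.\<close>

lemma extragradient_norm_descent:
  fixes a G Z :: "'a::real_inner"
  assumes "0 \<le> G \<bullet> a" "0 \<le> Z \<bullet> (a - h *\<^sub>R G)" "norm (Z - G) \<le> \<nu> * norm G"
    and "0 \<le> h" "0 \<le> \<beta>" "\<beta> \<le> 1"
  shows "(norm (a - h *\<^sub>R (G - \<beta> *\<^sub>R (G - Z))))\<^sup>2
     \<le> (norm a)\<^sup>2 - (2 * \<beta> - 1 - \<beta>\<^sup>2 * \<nu>\<^sup>2) * h\<^sup>2 * (norm G)\<^sup>2"
proof -
  have expand: "(norm (a - h *\<^sub>R (G - \<beta> *\<^sub>R (G - Z))))\<^sup>2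
      = (norm a)\<^sup>2 - 2 * h * (1 - \<beta>) * (G \<bullet> a) - 2 * h * \<beta> * (Z \<bullet> a)
        + h\<^sup>2 * ((1 - 2 * \<beta>) * (norm G)\<^sup>2 + 2 * \<beta> * (G \<bullet> Z) + \<beta>\<^sup>2 * (norm (Z - G))\<^sup>2)"
    unfolding power2_norm_eq_inner
    by (simp add: inner_diff_left inner_diff_right inner_commute power2_eq_square algebra_simps)
  have "h * \<beta> * (h * (G \<bullet> Z)) \<le> h * \<beta> * (Z \<bullet> a)"
    using assms(2,4,5) by (intro mult_left_mono) (auto simp: inner_diff_right inner_commute)
  moreover have "h\<^sup>2 * \<beta>\<^sup>2 * (norm (Z - G))\<^sup>2 \<le> h\<^sup>2 * \<beta>\<^sup>2 * (\<nu> * norm G)\<^sup>2"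
    using assms(3) by (intro mult_left_mono power_mono) auto
  moreover have "0 \<le> h * (1 - \<beta>) * (G \<bullet> a)"
    using assms by simp
  ultimately show ?thesis
    unfolding expand by (simp add: algebra_simps power2_eq_square)
qed

lemma hstep_descent:
  fixes g :: "'a::real_inner \<Rightarrow> 'a"
  assumes pm: "pseudo_monotone g" and xs: "g xs = 0" and gx: "g x \<noteq> 0"
    and lip: "L-lipschitz_on UNIV g"
    and \<theta>: "0 < \<theta>" "\<theta> < 1" and \<nu>: "0 < \<nu>" "\<nu> < 1" and \<beta>: "0 \<le> \<beta>" "\<beta> \<le> 1"
    and \<gamma>0: "0 < hlo" "hlo \<le> \<gamma>0" and hhi: "1 \<le> hhi"
    and \<kappa>: "0 \<le> 2 * \<beta> - 1 - \<beta>\<^sup>2 * \<nu>\<^sup>2"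
  defines "h \<equiv> hstep g \<nu> \<theta> x \<gamma>0"
  shows "(norm (x - h *\<^sub>R (g x - \<beta> *\<^sub>R (g x - g (x - h *\<^sub>R g x))) - xs))\<^sup>2
     \<le> (norm (x - xs))\<^sup>2 - (2 * \<beta> - 1 - \<beta>\<^sup>2 * \<nu>\<^sup>2)
          * (min hlo (\<nu> * \<theta> / (hhi * (max L 1)\<^sup>2)))\<^sup>2 * (norm (g x))\<^sup>2"
proof -
  define M where "M = max L 1"
  have M: "1 \<le> M" "L \<le> M" unfolding M_def by auto
  have \<gamma>0_pos: "0 < \<gamma>0" using \<gamma>0 by linarith
  have h: "0 < h" "rratio g x h \<le> \<nu>"
    unfolding h_def using hstep_pos[OF gx lip \<theta> \<nu>(1) \<gamma>0_pos]
      rratio_hstep_le[OF gx lip \<theta> \<nu>(1) \<gamma>0_pos] by simp_all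
  have "0 \<le> g x \<bullet> (x - xs)"
    using pseudo_monotone_stationary_inner_nonneg[OF pm xs] .
  moreover have "0 \<le> g (x - h *\<^sub>R g x) \<bullet> ((x - xs) - h *\<^sub>R g x)"
    using pseudo_monotone_stationary_inner_nonneg[OF pm xs, of "x - h *\<^sub>R g x"]
    by (simp add: algebra_simps)
  moreover have "norm (g (x - h *\<^sub>R g x) - g x) \<le> \<nu> * norm (g x)"
    using h gx by (simp add: rratio_eq ztrial_def divide_le_eq)
  ultimately have "(norm ((x - xs) - h *\<^sub>R (g x - \<beta> *\<^sub>R (g x - g (x - h *\<^sub>R g x)))))\<^sup>2
      \<le> (norm (x - xs))\<^sup>2 - (2 * \<beta> - 1 - \<beta>\<^sup>2 * \<nu>\<^sup>2) * h\<^sup>2 * (norm (g x))\<^sup>2"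
    using h \<beta> by (intro extragradient_norm_descent) auto
  moreover have "min hlo (\<nu> * \<theta> / (hhi * M\<^sup>2)) \<le> h"
  proof -
    have "1 \<le> hhi * M"
      using mult_mono[OF hhi M(1)] hhi by simp
    then have "M \<le> hhi * M\<^sup>2"
      using mult_right_mono[of 1 "hhi * M" M] M by (simp add: power2_eq_square mult.assoc)
    then have "\<nu> * \<theta> / (hhi * M\<^sup>2) \<le> \<theta> * \<nu> / M"
      using M \<nu> \<theta> by (simp add: divide_left_mono mult.commute)
    moreover have "min \<gamma>0 (\<theta> * \<nu> / M) \<le> h"
      unfolding h_def using hstep_ge[OF gx lip \<theta> \<nu>(1) _ \<gamma>0_pos M(2)] \<nu> M by simp
    ultimately show ?thesis using \<gamma>0 by linarith
  qed
  then have "(min hlo (\<nu> * \<theta> / (hhi * M\<^sup>2)))\<^sup>2 * (norm (g x))\<^sup>2 \<le> h\<^sup>2 * (norm (g x))\<^sup>2"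
    using M \<nu> \<theta> \<gamma>0 hhi by (intro mult_right_mono power_mono) auto
  ultimately show ?thesis
    unfolding M_def using mult_left_mono[OF _ \<kappa>] by (fastforce simp: algebra_simps)
qed

lemma descent_coefficient_pos:
  fixes \<nu> \<beta> :: real
  assumes "0 < \<nu>" "\<nu> < 1" "(1 - sqrt (1 - \<nu>\<^sup>2)) / \<nu>\<^sup>2 < \<beta>" "\<beta> \<le> 1"
  shows "0 < 2 * \<beta> - 1 - \<beta>\<^sup>2 * \<nu>\<^sup>2"
proof -
  define s where "s = sqrt (1 - \<nu>\<^sup>2)"
  have \<nu>2: "0 < \<nu>\<^sup>2" "\<nu>\<^sup>2 < 1"
    using assms by (auto simp: power_less_one_iff)
  have s: "0 \<le> s" "s\<^sup>2 = 1 - \<nu>\<^sup>2"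
    unfolding s_def using \<nu>2 by auto
  have "1 - s < \<nu>\<^sup>2 * \<beta>"
    using assms(3) \<nu>2 unfolding s_def[symmetric] by (simp add: divide_less_eq mult.commute)
  moreover have "\<nu>\<^sup>2 * \<beta> < 1"
    using assms(4) \<nu>2 by (smt (verit) mult_left_le)
  ultimately have "(1 - \<nu>\<^sup>2 * \<beta>)\<^sup>2 < s\<^sup>2"
    using s by (intro power_strict_mono) auto
  then have "0 < \<nu>\<^sup>2 * (2 * \<beta> - 1 - \<beta>\<^sup>2 * \<nu>\<^sup>2)"
    unfolding s by (simp add: algebra_simps power2_eq_square)
  then show ?thesis
    using \<nu>2 by (simp add: zero_less_mult_iff)
qed

lemma telescoping_descent:
  fixes d c :: "nat \<Rightarrow> real"
  assumes "\<And>k. d (Suc k) \<le> d k - c k"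
  shows "d n + (\<Sum>k<n. c k) \<le> d 0"
  using assms by (induction n) (auto, smt (verit))

lemma fst_alg2_Suc:
  "fst (alg2 g \<mu> \<nu> \<theta> \<tau> \<beta> hlo hhi x0 \<gamma>00 (Suc k)) =
     (let x = fst (alg2 g \<mu> \<nu> \<theta> \<tau> \<beta> hlo hhi x0 \<gamma>00 k);
          h = hstep g \<nu> \<theta> x (snd (alg2 g \<mu> \<nu> \<theta> \<tau> \<beta> hlo hhi x0 \<gamma>00 k))
      in x - h *\<^sub>R (g x - \<beta> *\<^sub>R (g x - g (x - h *\<^sub>R g x))))"
  by (simp add: Let_def case_prod_beta)

lemma snd_alg2_in_interval:
  assumes "hlo \<le> \<gamma>00" "\<gamma>00 \<le> hhi"
  shows "hlo \<le> snd (alg2 g \<mu> \<nu> \<theta> \<tau> \<beta> hlo hhi x0 \<gamma>00 k)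
    \<and> snd (alg2 g \<mu> \<nu> \<theta> \<tau> \<beta> hlo hhi x0 \<gamma>00 k) \<le> hhi"
  using assms by (cases k) (auto simp: Let_def case_prod_beta proj_interval_def)

theorem theorem4:
  fixes f :: "real ^ 'n \<Rightarrow> real" and g :: "real ^ 'n \<Rightarrow> real ^ 'n"
    and L \<mu> \<nu> \<theta> \<tau> \<beta> hlo hhi \<gamma>00 :: real and x0 :: "real ^ 'n"
  assumes grad: "\<And>x. GDERIV f x :> g x"
    and pc: "pseudo_monotone g"
    and lip: "L-lipschitz_on UNIV g"
    and nonempty: "{x. g x = 0} \<noteq> {}"
    and mu: "0 < \<mu>" "\<mu> < \<nu>" "\<nu> < 1"
    and hb: "0 < hlo" "hlo < 1" "1 \<le> \<gamma>00" "\<gamma>00 \<le> hhi"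
    and th: "0 < \<theta>" "\<theta> < 1"
    and tau: "\<tau> > 1"
    and beta: "(1 - sqrt (1 - \<nu>\<^sup>2)) / \<nu>\<^sup>2 < \<beta>" "\<beta> \<le> 1"
    and nz: "\<And>k. g (fst (alg2 g \<mu> \<nu> \<theta> \<tau> \<beta> hlo hhi x0 \<gamma>00 k)) \<noteq> 0"
    and xs: "g xs = 0"
    and K: "K \<ge> (1::nat)"
  shows "(1 / real K) * (\<Sum>k<K. (norm (g (fst (alg2 g \<mu> \<nu> \<theta> \<tau> \<beta> hlo hhi x0 \<gamma>00 k))))\<^sup>2)
     \<le> (norm (x0 - xs))\<^sup>2 /
        (real K * (2 * \<beta> - 1 - \<beta>\<^sup>2 * \<nu>\<^sup>2)
          * (min hlo (\<nu> * \<theta> / (hhi * (max L 1)\<^sup>2)))\<^sup>2)"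
proof -
  define X where "X k = fst (alg2 g \<mu> \<nu> \<theta> \<tau> \<beta> hlo hhi x0 \<gamma>00 k)" for k
  define \<kappa> where "\<kappa> = 2 * \<beta> - 1 - \<beta>\<^sup>2 * \<nu>\<^sup>2"
  define hmin where "hmin = min hlo (\<nu> * \<theta> / (hhi * (max L 1)\<^sup>2))"
  have \<nu>: "0 < \<nu>" using mu by linarith
  have \<kappa>: "0 < \<kappa>" unfolding \<kappa>_def using descent_coefficient_pos[OF \<nu> mu(3) beta] .
  have \<beta>: "0 \<le> \<beta>" using \<kappa> unfolding \<kappa>_def by (smt (verit) zero_le_power2 mult_nonneg_nonneg)
  have hmin: "0 < hmin" unfolding hmin_def using hb th \<nu> by simp
  have "(norm (X (Suc k) - xs))\<^sup>2
      \<le> (norm (X k - xs))\<^sup>2 - \<kappa> * hmin\<^sup>2 * (norm (g (X k)))\<^sup>2" for k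
  proof -
    have "hlo \<le> snd (alg2 g \<mu> \<nu> \<theta> \<tau> \<beta> hlo hhi x0 \<gamma>00 k)" "1 \<le> hhi"
      using snd_alg2_in_interval[of hlo \<gamma>00 hhi g \<mu> \<nu> \<theta> \<tau> \<beta> x0 k] hb by simp_all
    from hstep_descent[OF pc xs nz lip th \<nu> mu(3) \<beta> beta(2) hb(1) this
        less_imp_le[OF \<kappa>[unfolded \<kappa>_def]]]
    show ?thesis
      unfolding X_def fst_alg2_Suc Let_def \<kappa>_def hmin_def .
  qed
  then have "\<kappa> * hmin\<^sup>2 * (\<Sum>k<K. (norm (g (X k)))\<^sup>2) \<le> (norm (x0 - xs))\<^sup>2"
    using telescoping_descent[of "\<lambda>k. (norm (X k - xs))\<^sup>2"
        "\<lambda>k. \<kappa> * hmin\<^sup>2 * (norm (g (X k)))\<^sup>2" K]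
    by (simp add: X_def sum_distrib_left) (smt (verit) zero_le_power2)
  moreover have "0 < real K * \<kappa> * hmin\<^sup>2"
    using K \<kappa> hmin by simp
  ultimately have "1 / real K * (\<Sum>k<K. (norm (g (X k)))\<^sup>2)
      \<le> (norm (x0 - xs))\<^sup>2 / (real K * \<kappa> * hmin\<^sup>2)"
    by (simp add: field_simps)
  then show ?thesis
    unfolding X_def \<kappa>_def hmin_def .
qed

end
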